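(* (Poisson case as $\alpha\to0$.) Let $\gamma>0$, $\boldsymbol{z}\in\mathbb{N}^n$ and $\boldsymbol{y}=\gamma\boldsymbol{z}$. For $\alpha\in(0,1)$ let $\boldsymbol{\omega}=(\omega_1,\dots,\omega_n)$ have independent coordinates $\omega_i\sim\mathrm{Bin}(z_i,\alpha)$, and set $\boldsymbol{y}_1=\frac{\boldsymbol{y}-\gamma\boldsymbol{\omega}}{1-\alpha}$ and $\boldsymbol{y}_2=\frac1\alpha\boldsymbol{y}-\frac{1-\alpha}\alpha\boldsymbol{y}_1=\gamma\boldsymbol{\omega}/\alpha$. Let $f:\mathbb{R}^n\to\mathbb{R}^n$ be continuous. Then $$\lim_{\alpha\to0}\Big(\mathbb{E}_{\boldsymbol{\omega}}\|f(\boldsymbol{y}_1)-\boldsymbol{y}_2\|_2^2-\mathbb{E}_{\boldsymbol{\omega}}\|\boldsymbol{y}_2-\boldsymbol{y}\|_2^2\Big)=\|f(\boldsymbol{y})-\boldsymbol{y}\|_2^2+2\sum_{i=1}^n y_i\big(f_i(\boldsymbol{y})-f_i(\boldsymbol{y}-\gamma\boldsymbol{e}_i)\big),$$ where $\boldsymbol{e}_i$ is the $i$-th canonical basis vector of $\mathbb{R}^n$.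
   Context: This is the GR2R re-corruption for the scaled Poisson model $\boldsymbol{y}=\gamma\boldsymbol{z}$, $\boldsymbol{z}\sim\mathcal{P}(\boldsymbol{x}/\gamma)$ (independent Poisson coordinates). The subtracted term $\mathbb{E}_{\boldsymbol{\omega}}\|\boldsymbol{y}_2-\boldsymbol{y}\|_2^2$ does not depend on $f$. *)

theory Defs
  imports "HOL-Analysis.Analysis" "HOL-Probability.Probability"
begin

definition omega_pmf :: "('n::finite \<Rightarrow> nat) \<Rightarrow> real \<Rightarrow> ('n \<Rightarrow> nat) pmf" where
  "omega_pmf z \<alpha> = Pi_pmf UNIV 0 (\<lambda>i. binomial_pmf (z i) \<alpha>)"

end

theory Submission
  imports Defs
begin

(* For 0 < alpha < 1 one has y2 = gamma omega / alpha, and expanding the squares gives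
     |f(y1) - y2|^2 - |y2 - y|^2 = |f(y1)|^2 - |y|^2 + sum_i (omega_i / alpha) 2 gamma (y_i - f_i(y1)).
   The expectation is a finite sum over omega <= z.  As alpha -> 0 the probability of omega tends to
   the indicator of omega = 0, while omega_i P(omega) / alpha tends to z_i times the indicator of
   omega = e_i: among the binomial weights only the single-event one is of first order in alpha.
   Since y1 -> y - gamma omega and f is continuous, the limit is
   |f(y)|^2 - |y|^2 + sum_i 2 gamma z_i (y_i - f_i(y - gamma e_i)), a rearrangement of the claim. *)

lemma tendsto_pmf_binomial_at_right_0:
  "((\<lambda>p. pmf (binomial_pmf n p) k) \<longlongrightarrow> of_bool (k = 0)) (at_right (0::real))"
proof -
  let ?q = "\<lambda>p. real (n choose k) * p ^ k * (1 - p) ^ (n - k)"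
  have "(?q \<longlongrightarrow> ?q 0) (at_right 0)"
    by (intro tendsto_intros)
  moreover have "\<forall>\<^sub>F p in at_right 0. ?q p = pmf (binomial_pmf n p) k"
    by (auto simp: eventually_at_right_field intro!: exI[of _ 1])
  ultimately show ?thesis
    by (auto simp: power_0_left intro: Lim_transform_eventually)
qed

lemma tendsto_pmf_binomial_div_at_right_0:
  "((\<lambda>p. real k * pmf (binomial_pmf n p) k / p) \<longlongrightarrow> (if k = 1 then real n else 0))
     (at_right (0::real))"
proof (cases k)
  case (Suc j)
  let ?q = "\<lambda>p. real k * real (n choose k) * p ^ j * (1 - p) ^ (n - k)"
  have "(?q \<longlongrightarrow> ?q 0) (at_right 0)"
    by (intro tendsto_intros)
  moreover have "\<forall>\<^sub>F p in at_right 0. ?q p = real k * pmf (binomial_pmf n p) k / p"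
    using Suc by (auto simp: eventually_at_right_field intro!: exI[of _ 1])
  ultimately show ?thesis
    using Suc by (auto simp: power_0_left intro: Lim_transform_eventually)
qed simp

lemma pmf_omega_pmf:
  "pmf (omega_pmf z a) w = (\<Prod>k\<in>UNIV. pmf (binomial_pmf (z k) a) (w k))"
  unfolding omega_pmf_def by (rule pmf_Pi') auto

lemma set_pmf_omega_pmf_subset:
  assumes "0 \<le> a" "a \<le> 1"
  shows "set_pmf (omega_pmf z a) \<subseteq> Pi\<^sub>E UNIV (\<lambda>k. {..z k})"
  using assms unfolding omega_pmf_def
  by (auto simp: set_Pi_pmf PiE_dflt_def set_pmf_binomial_eq split: if_splits)

lemma expectation_omega_pmf:
  assumes "0 \<le> a" "a \<le> 1"
  shows "measure_pmf.expectation (omega_pmf z a) g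
           = (\<Sum>w\<in>Pi\<^sub>E UNIV (\<lambda>k. {..z k}). g w * pmf (omega_pmf z a) w)"
  using set_pmf_omega_pmf_subset[OF assms]
  by (intro integral_measure_pmf_real) (auto simp: finite_PiE)

lemma integrable_omega_pmf:
  fixes g :: "('n::finite \<Rightarrow> nat) \<Rightarrow> real"
  assumes "0 \<le> a" "a \<le> 1"
  shows "integrable (omega_pmf z a) g"
  using set_pmf_omega_pmf_subset[OF assms, of z]
  by (intro integrable_measure_pmf_finite finite_subset[OF _ finite_PiE]) auto

lemma tendsto_pmf_omega_pmf_at_right_0:
  "((\<lambda>a. pmf (omega_pmf z a) w) \<longlongrightarrow> of_bool (w = (\<lambda>_. 0))) (at_right 0)"
proof -
  let ?q = "\<lambda>a. \<Prod>k\<in>UNIV. pmf (binomial_pmf (z k) a) (w k)"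
  have "(?q \<longlongrightarrow> (\<Prod>k\<in>UNIV. of_bool (w k = 0))) (at_right 0)"
    by (intro tendsto_prod tendsto_pmf_binomial_at_right_0)
  moreover have "(\<Prod>k\<in>UNIV. of_bool (w k = 0) :: real) = of_bool (w = (\<lambda>_. 0))"
    by (auto simp: fun_eq_iff)
  moreover have "\<forall>\<^sub>F a in at_right 0. ?q a = pmf (omega_pmf z a) w"
    by (auto simp: eventually_at_right_field pmf_omega_pmf intro!: exI[of _ 1])
  ultimately show ?thesis
    by (auto intro: Lim_transform_eventually)
qed

lemma tendsto_pmf_omega_pmf_div_at_right_0:
  "((\<lambda>a. real (w i) * pmf (omega_pmf z a) w / a)
      \<longlongrightarrow> (if w = indicator {i} then real (z i) else 0)) (at_right 0)"
proof -
  let ?p = "\<lambda>a k. pmf (binomial_pmf (z k) a) (w k)"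
  let ?q = "\<lambda>a. real (w i) * ?p a i / a * (\<Prod>k\<in>UNIV-{i}. ?p a k)"
  have "(?q \<longlongrightarrow> (if w i = 1 then real (z i) else 0) * (\<Prod>k\<in>UNIV-{i}. of_bool (w k = 0)))
          (at_right 0)"
    by (intro tendsto_mult tendsto_prod tendsto_pmf_binomial_at_right_0
              tendsto_pmf_binomial_div_at_right_0)
  moreover have "(if w i = 1 then real (z i) else 0) * (\<Prod>k\<in>UNIV-{i}. of_bool (w k = 0))
                   = (if w = indicator {i} then real (z i) else 0)"
    by (auto simp: fun_eq_iff indicator_def)
  moreover have "\<forall>\<^sub>F a in at_right 0. ?q a = real (w i) * pmf (omega_pmf z a) w / a"
    by (auto simp: eventually_at_right_field pmf_omega_pmf prod.remove[of UNIV i] intro!: exI[of _ 1])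
  ultimately show ?thesis
    by (auto intro: Lim_transform_eventually)
qed

lemma tendsto_expectation_omega_pmf_at_right_0:
  fixes g :: "real \<Rightarrow> ('n::finite \<Rightarrow> nat) \<Rightarrow> real"
  assumes "\<And>w. ((\<lambda>a. g a w) \<longlongrightarrow> g0 w) (at_right 0)"
  shows "((\<lambda>a. measure_pmf.expectation (omega_pmf z a) (g a)) \<longlongrightarrow> g0 (\<lambda>_. 0)) (at_right 0)"
proof -
  let ?B = "Pi\<^sub>E UNIV (\<lambda>k. {..z k})"
  let ?q = "\<lambda>a. \<Sum>w\<in>?B. g a w * pmf (omega_pmf z a) w"
  have "(?q \<longlongrightarrow> (\<Sum>w\<in>?B. g0 w * of_bool (w = (\<lambda>_. 0)))) (at_right 0)"
    by (intro tendsto_sum tendsto_mult assms tendsto_pmf_omega_pmf_at_right_0)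
  moreover have "(\<Sum>w\<in>?B. g0 w * of_bool (w = (\<lambda>_. 0))) = g0 (\<lambda>_. 0)"
  proof -
    have "(\<lambda>_. 0) \<in> ?B"
      by (auto simp: PiE_UNIV_domain)
    then show ?thesis
      by (simp add: of_bool_def if_distrib finite_PiE cong: if_cong)
  qed
  moreover have "\<forall>\<^sub>F a in at_right 0. ?q a = measure_pmf.expectation (omega_pmf z a) (g a)"
    by (auto simp: eventually_at_right_field expectation_omega_pmf intro!: exI[of _ 1])
  ultimately show ?thesis
    by (auto intro: Lim_transform_eventually)
qed

lemma tendsto_expectation_omega_pmf_div_at_right_0:
  fixes g :: "real \<Rightarrow> ('n::finite \<Rightarrow> nat) \<Rightarrow> real"
  assumes "\<And>w. ((\<lambda>a. g a w) \<longlongrightarrow> g0 w) (at_right 0)"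
  shows "((\<lambda>a. measure_pmf.expectation (omega_pmf z a) (\<lambda>w. real (w i) / a * g a w))
           \<longlongrightarrow> real (z i) * g0 (indicator {i})) (at_right 0)"
proof -
  let ?B = "Pi\<^sub>E UNIV (\<lambda>k. {..z k})"
  let ?q = "\<lambda>a. \<Sum>w\<in>?B. g a w * (real (w i) * pmf (omega_pmf z a) w / a)"
  have "(?q \<longlongrightarrow> (\<Sum>w\<in>?B. g0 w * (if w = indicator {i} then real (z i) else 0))) (at_right 0)"
    by (intro tendsto_sum tendsto_mult assms tendsto_pmf_omega_pmf_div_at_right_0)
  moreover have "(\<Sum>w\<in>?B. g0 w * (if w = indicator {i} then real (z i) else 0))
                   = real (z i) * g0 (indicator {i})"
  proof -
    have "indicator {i} \<in> ?B" if "z i \<noteq> 0"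
      using that by (auto simp: PiE_UNIV_domain indicator_def)
    then show ?thesis
      by (auto simp: if_distrib finite_PiE cong: if_cong)
  qed
  moreover have "\<forall>\<^sub>F a in at_right 0.
                   ?q a = measure_pmf.expectation (omega_pmf z a) (\<lambda>w. real (w i) / a * g a w)"
    by (auto simp: eventually_at_right_field expectation_omega_pmf sum_divide_distrib mult_ac
             intro!: exI[of _ 1])
  ultimately show ?thesis
    by (auto intro: Lim_transform_eventually)
qed

lemma power2_norm_diff_scaleR_sub_power2_norm_diff:
  fixes u v y :: "real^'n"
  shows "(norm (u - c *\<^sub>R v))\<^sup>2 - (norm (c *\<^sub>R v - y))\<^sup>2
           = (norm u)\<^sup>2 - (norm y)\<^sup>2 + (\<Sum>i\<in>UNIV. c * v $ i * (2 * (y $ i - u $ i)))"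
proof -
  have "(norm (u - c *\<^sub>R v))\<^sup>2 - (norm (c *\<^sub>R v - y))\<^sup>2
          = (norm u)\<^sup>2 - (norm y)\<^sup>2 - 2 * inner (u - y) (c *\<^sub>R v)"
    by (simp add: power2_norm_eq_inner inner_diff_left inner_diff_right inner_commute algebra_simps)
  also have "\<dots> = (norm u)\<^sup>2 - (norm y)\<^sup>2 + (\<Sum>i\<in>UNIV. c * v $ i * (2 * (y $ i - u $ i)))"
    by (simp add: inner_vec_def sum_distrib_left flip: sum_negf)
       (intro sum.cong refl; simp add: algebra_simps)
  finally show ?thesis .
qed

lemma tendsto_expectation_recorruption_loss:
  fixes F :: "real \<Rightarrow> ('n::finite \<Rightarrow> nat) \<Rightarrow> real^'n"
  assumes F: "\<And>\<omega>. ((\<lambda>a. F a \<omega>) \<longlongrightarrow> F0 \<omega>) (at_right 0)"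
  shows "((\<lambda>a. measure_pmf.expectation (omega_pmf z a)
                  (\<lambda>\<omega>. (norm (F a \<omega> - (\<gamma> / a) *\<^sub>R (\<chi> i. real (\<omega> i))))\<^sup>2)
              - measure_pmf.expectation (omega_pmf z a)
                  (\<lambda>\<omega>. (norm ((\<gamma> / a) *\<^sub>R (\<chi> i. real (\<omega> i)) - y))\<^sup>2))
          \<longlongrightarrow> (norm (F0 (\<lambda>_. 0)))\<^sup>2 - (norm y)\<^sup>2
              + (\<Sum>i\<in>UNIV. real (z i) * (2 * \<gamma> * (y $ i - F0 (indicator {i}) $ i))))
         (at_right 0)"
    (is "(?L \<longlongrightarrow> ?l) _")
proof -
  define G where "G a \<omega> = (norm (F a \<omega>))\<^sup>2 - (norm y)\<^sup>2" for a \<omega>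
  define H where "H i a \<omega> = 2 * \<gamma> * (y $ i - F a \<omega> $ i)" for i a \<omega>
  let ?R = "\<lambda>a. measure_pmf.expectation (omega_pmf z a) (G a)
     + (\<Sum>i\<in>UNIV. measure_pmf.expectation (omega_pmf z a) (\<lambda>\<omega>. real (\<omega> i) / a * H i a \<omega>))"
  have "((\<lambda>a. G a \<omega>) \<longlongrightarrow> (norm (F0 \<omega>))\<^sup>2 - (norm y)\<^sup>2) (at_right 0)"
       "((\<lambda>a. H i a \<omega>) \<longlongrightarrow> 2 * \<gamma> * (y $ i - F0 \<omega> $ i)) (at_right 0)" for i \<omega>
    unfolding G_def H_def by (intro tendsto_intros F)+
  then have "(?R \<longlongrightarrow> ?l) (at_right 0)"
    by (intro tendsto_add tendsto_sum tendsto_expectation_omega_pmf_at_right_0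
              tendsto_expectation_omega_pmf_div_at_right_0)
  moreover have "?R a = ?L a" if "0 < a" "a < 1" for a
  proof -
    have int: "integrable (omega_pmf z a) g" for g :: "('n \<Rightarrow> nat) \<Rightarrow> real"
      using that by (intro integrable_omega_pmf) auto
    have "?R a = measure_pmf.expectation (omega_pmf z a)
                   (\<lambda>\<omega>. G a \<omega> + (\<Sum>i\<in>UNIV. real (\<omega> i) / a * H i a \<omega>))"
      by (subst Bochner_Integration.integral_add)
         (auto simp: int intro: Bochner_Integration.integral_sum[symmetric])
    also have "\<dots> = measure_pmf.expectation (omega_pmf z a)
                      (\<lambda>\<omega>. (norm (F a \<omega> - (\<gamma> / a) *\<^sub>R (\<chi> i. real (\<omega> i))))\<^sup>2
                           - (norm ((\<gamma> / a) *\<^sub>R (\<chi> i. real (\<omega> i)) - y))\<^sup>2)"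
      unfolding power2_norm_diff_scaleR_sub_power2_norm_diff G_def H_def
      by (intro Bochner_Integration.integral_cong refl arg_cong2[where f = "(+)"] sum.cong) auto
    finally show ?thesis
      by (simp add: int)
  qed
  then have "\<forall>\<^sub>F a in at_right 0. ?R a = ?L a"
    by (auto simp only: eventually_at_right_field intro!: exI[of _ 1])
  ultimately show ?thesis
    by (rule Lim_transform_eventually)
qed

lemma recorruption_limit_eq:
  fixes u y :: "real^'n" and v :: "'n \<Rightarrow> real^'n"
  assumes "\<And>i. y $ i = \<gamma> * real (z i)"
  shows "(norm u)\<^sup>2 - (norm y)\<^sup>2 + (\<Sum>i\<in>UNIV. real (z i) * (2 * \<gamma> * (y $ i - v i $ i)))
           = (norm (u - y))\<^sup>2 + 2 * (\<Sum>i\<in>UNIV. y $ i * (u $ i - v i $ i))"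
proof -
  have "(norm u)\<^sup>2 - (norm y)\<^sup>2 = (norm (u - y))\<^sup>2 + 2 * inner (u - y) y"
    by (simp add: power2_norm_eq_inner inner_diff_left inner_diff_right inner_commute)
  then show ?thesis
    by (simp add: inner_vec_def sum_distrib_left flip: sum.distrib)
       (intro sum.cong refl; simp add: assms algebra_simps)
qed

theorem mainTheorem6:
  fixes \<gamma> :: real and z :: "'n::finite \<Rightarrow> nat" and f :: "real^'n \<Rightarrow> real^'n"
  assumes "\<gamma> > 0"
    and "continuous_on UNIV f"
  defines "y \<equiv> (\<chi> i. \<gamma> * real (z i))"
  defines "y1 \<equiv> (\<lambda>\<alpha> (\<omega>::'n \<Rightarrow> nat). (1 / (1 - \<alpha>)) *\<^sub>R (y - \<gamma> *\<^sub>R (\<chi> i. real (\<omega> i))))"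
  defines "y2 \<equiv> (\<lambda>\<alpha> (\<omega>::'n \<Rightarrow> nat). (1 / \<alpha>) *\<^sub>R y - ((1 - \<alpha>) / \<alpha>) *\<^sub>R y1 \<alpha> \<omega>)"
  shows "((\<lambda>\<alpha>. measure_pmf.expectation (omega_pmf z \<alpha>) (\<lambda>\<omega>. (norm (f (y1 \<alpha> \<omega>) - y2 \<alpha> \<omega>))\<^sup>2)
              - measure_pmf.expectation (omega_pmf z \<alpha>) (\<lambda>\<omega>. (norm (y2 \<alpha> \<omega> - y))\<^sup>2))
          \<longlongrightarrow> (norm (f y - y))\<^sup>2
              + 2 * (\<Sum>i\<in>UNIV. y $ i * (f y $ i - f (y - \<gamma> *\<^sub>R axis i 1) $ i)))
         (at_right 0)"
proof -
  have y2_eq: "y2 a \<omega> = (\<gamma> / a) *\<^sub>R (\<chi> i. real (\<omega> i))" if "0 < a" "a < 1" for a \<omega>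
    using that unfolding y2_def y1_def by (simp add: vec_eq_iff field_simps)
  have "((\<lambda>a. y1 a \<omega>) \<longlongrightarrow> y1 0 \<omega>) (at_right 0)" for \<omega>
    unfolding y1_def by (intro tendsto_intros) auto
  then have "((\<lambda>a. f (y1 a \<omega>)) \<longlongrightarrow> f (y1 0 \<omega>)) (at_right 0)" for \<omega>
    by (rule continuous_on_tendsto_compose[OF assms(2)]) auto
  from tendsto_expectation_recorruption_loss[where F = "\<lambda>a \<omega>. f (y1 a \<omega>)", OF this, of z \<gamma> y]
  have limit: "((\<lambda>a. measure_pmf.expectation (omega_pmf z a) (\<lambda>\<omega>. (norm (f (y1 a \<omega>) - y2 a \<omega>))\<^sup>2)
                 - measure_pmf.expectation (omega_pmf z a) (\<lambda>\<omega>. (norm (y2 a \<omega> - y))\<^sup>2))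
             \<longlongrightarrow> (norm (f (y1 0 (\<lambda>_. 0))))\<^sup>2 - (norm y)\<^sup>2
                 + (\<Sum>i\<in>UNIV. real (z i) * (2 * \<gamma> * (y $ i - f (y1 0 (indicator {i})) $ i))))
            (at_right 0)"
    by (rule Lim_transform_eventually) (auto simp: eventually_at_right_field y2_eq intro!: exI[of _ 1])
  have y1_0: "y1 0 (\<lambda>_. 0) = y" "y1 0 (indicator {i}) = y - \<gamma> *\<^sub>R axis i 1" for i
    by (auto simp: y1_def vec_eq_iff axis_def indicator_def)
  have y_nth: "y $ i = \<gamma> * real (z i)" for i
    by (simp add: y_def)
  show ?thesis
    using limit unfolding y1_0 recorruption_limit_eq[OF y_nth] .
qed

end
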